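(* Let $T\in\mathrm{Aut}(X,\mu)$, let $P\in\mathrm{Aut}(X,\mu)$ be periodic with fundamental domain $D$, and set $U=T_DP$. Then: (i) $U_D=T_D$; (ii) for almost every $x\in D$, the first return time of $U$ to $D$ at $x$, $\min\{n\ge1:U^n(x)\in D\}$, equals the cardinality of the $P$-orbit of $x$; (iii) if moreover $P\in[T]$, then $T$ and $U$ have the same orbits.
   Context: $(X,\mu)$ standard atomless probability space; $\mathrm{Aut}(X,\mu)$ measure-preserving transformations modulo null sets. $P$ is periodic if almost every $P$-orbit is finite; a fundamental domain of $P$ is a measurable set meeting almost every $P$-orbit in exactly one point. $[T]$ is the set of $V\in\mathrm{Aut}(X,\mu)$ with $V(x)$ in the $T$-orbit of $x$ for a.e. $x$. For $V\in\mathrm{Aut}(X,\mu)$ and measurable $B$, the first return map $V_B$ is $V_B(x)=V^{n(x)}(x)$ with $n(x)=\min\{n\ge1:V^n(x)\in B\}$ for $x\in B$, and $V_B(x)=x$ for $x\notin B$. Having the same orbits means the orbits of a.e. point coincide. *)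

theory Defs
  imports "HOL-Probability.Probability"
begin

definition atomless :: "'a measure \<Rightarrow> bool" where
  "atomless M \<longleftrightarrow> (\<forall>A\<in>sets M. measure M A > 0 \<longrightarrow>
     (\<exists>B\<in>sets M. B \<subseteq> A \<and> 0 < measure M B \<and> measure M B < measure M A))"

text \<open>Representatives of elements of Aut(X,mu): bimeasurable measure-preserving
  bijections of the space (elements of Aut are considered modulo null sets,
  so all statements about them are made almost everywhere).\<close>
definition aut :: "'a measure \<Rightarrow> ('a \<Rightarrow> 'a) \<Rightarrow> bool" where
  "aut M T \<longleftrightarrow> bij_betw T (space M) (space M) \<and> T \<in> measurable M M \<and>
     the_inv_into (space M) T \<in> measurable M M \<and> distr M M T = M"

definition aut_orbit :: "'a measure \<Rightarrow> ('a \<Rightarrow> 'a) \<Rightarrow> 'a \<Rightarrow> 'a set" where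
  "aut_orbit M T x = {y. \<exists>n. y = (T ^^ n) x} \<union> {y. \<exists>n. y = (the_inv_into (space M) T ^^ n) x}"

definition periodic :: "'a measure \<Rightarrow> ('a \<Rightarrow> 'a) \<Rightarrow> bool" where
  "periodic M P \<longleftrightarrow> (AE x in M. finite (aut_orbit M P x))"

definition fundamental_domain :: "'a measure \<Rightarrow> ('a \<Rightarrow> 'a) \<Rightarrow> 'a set \<Rightarrow> bool" where
  "fundamental_domain M P D \<longleftrightarrow> D \<in> sets M \<and> (AE x in M. card (aut_orbit M P x \<inter> D) = 1)"

definition full_group :: "'a measure \<Rightarrow> ('a \<Rightarrow> 'a) \<Rightarrow> ('a \<Rightarrow> 'a) set" where
  "full_group M T = {V. aut M V \<and> (AE x in M. V x \<in> aut_orbit M T x)}"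

text \<open>First return time and first return map (identity off B, and on the null
  set of points of B that never return).\<close>
definition return_time :: "('a \<Rightarrow> 'a) \<Rightarrow> 'a set \<Rightarrow> 'a \<Rightarrow> nat" where
  "return_time V B x = (LEAST n. n \<ge> 1 \<and> (V ^^ n) x \<in> B)"

definition first_return :: "('a \<Rightarrow> 'a) \<Rightarrow> 'a set \<Rightarrow> 'a \<Rightarrow> 'a" where
  "first_return V B x =
     (if x \<in> B \<and> (\<exists>n\<ge>1. (V ^^ n) x \<in> B) then (V ^^ return_time V B x) x else x)"

definition same_orbits :: "'a measure \<Rightarrow> ('a \<Rightarrow> 'a) \<Rightarrow> ('a \<Rightarrow> 'a) \<Rightarrow> bool" where
  "same_orbits M T U \<longleftrightarrow> (AE x in M. aut_orbit M T x = aut_orbit M U x)"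

end

theory Submission
  imports Defs
begin

text \<open>
  Let \<open>d \<in> D\<close> have a \<open>P\<close>-cycle of length \<open>k\<close>. The points \<open>P d, \<dots>, P\<^sup>k\<^sup>-\<^sup>1 d\<close> lie outside
  \<open>D\<close>, where \<open>T\<^sub>D\<close> is the identity, so \<open>U = T\<^sub>D \<circ> P\<close> runs through the cycle like \<open>P\<close> and
  \<open>U\<^sup>k d = T\<^sub>D (P\<^sup>k d) = T\<^sub>D d\<close>; this gives (i) and (ii).

  For (iii), \<open>P \<in> [T]\<close> makes \<open>U\<close> move points inside their \<open>T\<close>-orbits. Conversely, by Poincare
  recurrence for \<open>T\<close> and \<open>T\<^sup>-\<^sup>1\<close>, off a null \<open>T\<close>-invariant set consecutive visits of a
  \<open>T\<close>-orbit to \<open>D\<close> are linked by \<open>T\<^sub>D\<close>, hence by powers of \<open>U\<close>, and every point is reached by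
  \<open>U\<close> from the point of \<open>D\<close> on its \<open>P\<close>-cycle. On that set the first return maps of \<open>T\<close> and
  \<open>T\<^sup>-\<^sup>1\<close> are mutually inverse, so \<open>U\<close> is invertible there and its orbits are the \<open>T\<close>-orbits.
\<close>

section \<open>Orbits of a pair of mutually inverse maps\<close>

definition bi_orbit :: "('a \<Rightarrow> 'a) \<Rightarrow> ('a \<Rightarrow> 'a) \<Rightarrow> 'a \<Rightarrow> 'a set" where
  "bi_orbit f g x = {y. \<exists>n. y = (f ^^ n) x} \<union> {y. \<exists>n. y = (g ^^ n) x}"

lemma aut_orbit_eq_bi_orbit: "aut_orbit M f x = bi_orbit f (the_inv_into (space M) f) x"
  by (simp add: aut_orbit_def bi_orbit_def)

lemma bi_orbit_commute: "bi_orbit g f x = bi_orbit f g x"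
  by (auto simp: bi_orbit_def)

lemma funpow_in_bi_orbit: "(f ^^ n) x \<in> bi_orbit f g x"
  by (auto simp: bi_orbit_def)

lemma self_in_bi_orbit: "x \<in> bi_orbit f g x"
  using funpow_in_bi_orbit[of 0] by simp

lemma bi_orbit_minimal:
  assumes "x \<in> S" "\<And>y. y \<in> S \<Longrightarrow> f y \<in> S" "\<And>y. y \<in> S \<Longrightarrow> g y \<in> S"
  shows "bi_orbit f g x \<subseteq> S"
proof -
  have "(f ^^ n) x \<in> S" "(g ^^ n) x \<in> S" for n
    by (induction n) (auto simp: assms)
  then show ?thesis by (auto simp: bi_orbit_def)
qed

locale inverse_on =
  fixes G :: "'a set" and f g :: "'a \<Rightarrow> 'a"
  assumes f_closed: "x \<in> G \<Longrightarrow> f x \<in> G" and g_closed: "x \<in> G \<Longrightarrow> g x \<in> G"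
    and g_f: "x \<in> G \<Longrightarrow> g (f x) = x" and f_g: "x \<in> G \<Longrightarrow> f (g x) = x"
begin

lemma inverse_on_swap: "inverse_on G g f"
  by unfold_locales (simp_all add: f_closed g_closed g_f f_g)

lemma funpow_closed: "x \<in> G \<Longrightarrow> (f ^^ n) x \<in> G"
  by (induction n) (auto simp: f_closed)

lemma g_funpow_f_funpow: "x \<in> G \<Longrightarrow> (g ^^ n) ((f ^^ n) x) = x"
proof (induction n)
  case (Suc n)
  have "(g ^^ Suc n) y = (g ^^ n) (g y)" for y
    by (simp add: funpow_Suc_right del: funpow.simps)
  with Suc g_f funpow_closed show ?case by simp
qed simp

lemma funpow_inj: "x \<in> G \<Longrightarrow> y \<in> G \<Longrightarrow> (f ^^ n) x = (f ^^ n) y \<Longrightarrow> x = y"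
  by (metis g_funpow_f_funpow)

lemma funpow_diff_fixed:
  assumes "x \<in> G" "a \<le> b" "(f ^^ a) x = (f ^^ b) x"
  shows "(f ^^ (b - a)) x = x"
proof -
  have "(f ^^ a) ((f ^^ (b - a)) x) = (f ^^ a) x"
    using assms(2,3) by (metis funpow_add le_add_diff_inverse comp_apply)
  then show ?thesis
    using funpow_inj funpow_closed assms(1) by blast
qed

lemma f_in_bi_orbit:
  assumes "x \<in> G" "y \<in> bi_orbit f g x"
  shows "f y \<in> bi_orbit f g x"
proof -
  consider n where "y = (f ^^ n) x" | n where "y = (g ^^ n) x"
    using assms(2) by (auto simp: bi_orbit_def)
  then show ?thesis
  proof cases
    case 1
    then show ?thesis using funpow_in_bi_orbit[of "Suc n" f x g] by simp
  next
    case 2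
    show ?thesis
    proof (cases n)
      case 0
      then show ?thesis using 2 funpow_in_bi_orbit[of 1 f x g] by simp
    next
      case (Suc m)
      then have "f y = (g ^^ m) x"
        using 2 f_g inverse_on.funpow_closed[OF inverse_on_swap] assms(1) by simp
      then show ?thesis using funpow_in_bi_orbit[of m g x f] by (simp add: bi_orbit_commute)
    qed
  qed
qed

lemma bi_orbit_trans:
  assumes "x \<in> G" "y \<in> bi_orbit f g x"
  shows "bi_orbit f g y \<subseteq> bi_orbit f g x"
proof (rule bi_orbit_minimal[OF assms(2)])
  fix z assume "z \<in> bi_orbit f g x"
  then show "f z \<in> bi_orbit f g x" using f_in_bi_orbit assms(1) by blast
  show "g z \<in> bi_orbit f g x"
    using inverse_on.f_in_bi_orbit[OF inverse_on_swap assms(1)] \<open>z \<in> bi_orbit f g x\<close>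
    by (simp add: bi_orbit_commute)
qed

lemma bi_orbit_sym:
  assumes "x \<in> G" "y \<in> bi_orbit f g x"
  shows "x \<in> bi_orbit f g y"
proof -
  consider n where "y = (f ^^ n) x" | n where "y = (g ^^ n) x"
    using assms(2) by (auto simp: bi_orbit_def)
  then show ?thesis
  proof cases
    case 1
    then have "x = (g ^^ n) y" using g_funpow_f_funpow assms(1) by simp
    then show ?thesis using funpow_in_bi_orbit[of n g y f] by (simp add: bi_orbit_commute)
  next
    case 2
    then have "x = (f ^^ n) y"
      using inverse_on.g_funpow_f_funpow[OF inverse_on_swap] assms(1) by simp
    then show ?thesis using funpow_in_bi_orbit by metis
  qed
qed

lemma bi_orbit_periodic:
  assumes "x \<in> G" "0 < p" "(f ^^ p) x = x"
  shows "bi_orbit f g x = (\<lambda>j. (f ^^ j) x) ` {..<p}"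
proof
  let ?S = "(\<lambda>j. (f ^^ j) x) ` {..<p}"
  have mod_p: "(f ^^ j) x = (f ^^ (j mod p)) x" for j
  proof (induction j rule: nat_less_induct)
    case (1 j)
    show ?case
    proof (cases "j < p")
      case False
      then have "(f ^^ j) x = (f ^^ (j - p)) ((f ^^ p) x)"
        by (metis funpow_add le_add_diff_inverse2 not_less comp_apply)
      with False assms 1 show ?thesis by (simp add: le_mod_geq)
    qed simp
  qed
  then have in_S: "(f ^^ j) x \<in> ?S" for j
    using assms(2) by (metis imageI lessThan_iff mod_less_divisor)
  show "bi_orbit f g x \<subseteq> ?S"
  proof (rule bi_orbit_minimal)
    show "x \<in> ?S" using in_S[of 0] by simp
    fix y assume "y \<in> ?S"
    then obtain j where j: "j < p" "y = (f ^^ j) x" by auto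
    show "f y \<in> ?S" using in_S[of "Suc j"] j by simp
    have "f ((f ^^ (j + p - 1)) x) = (f ^^ (j + p)) x"
      using assms(2) by (metis Suc_diff_1 add_gr_0 funpow.simps(2) comp_apply)
    also have "\<dots> = y"
      using j mod_p[of "j + p"] by simp
    finally have "f ((f ^^ (j + p - 1)) x) = y" .
    then have "g y = (f ^^ (j + p - 1)) x"
      using g_f funpow_closed assms(1) by metis
    then show "g y \<in> ?S" using in_S by simp
  qed
  show "?S \<subseteq> bi_orbit f g x" by (auto intro: funpow_in_bi_orbit)
qed

lemma finite_bi_orbit_least_period:
  assumes "x \<in> G" "finite (bi_orbit f g x)"
  defines "k \<equiv> card (bi_orbit f g x)"
  shows "0 < k" "(f ^^ k) x = x" "\<And>j. 0 < j \<Longrightarrow> j < k \<Longrightarrow> (f ^^ j) x \<noteq> x"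
    "bi_orbit f g x = (\<lambda>j. (f ^^ j) x) ` {..<k}"
proof -
  have "\<not> inj (\<lambda>j. (f ^^ j) x)"
  proof
    assume "inj (\<lambda>j. (f ^^ j) x)"
    then have "infinite (range (\<lambda>j. (f ^^ j) x))" by (rule range_inj_infinite)
    moreover have "range (\<lambda>j. (f ^^ j) x) \<subseteq> bi_orbit f g x"
      by (auto intro: funpow_in_bi_orbit)
    ultimately show False using assms(2) finite_subset by blast
  qed
  then obtain a b where "a < b" "(f ^^ a) x = (f ^^ b) x"
    unfolding inj_def by (metis linorder_neqE_nat)
  then have "\<exists>p. 0 < p \<and> (f ^^ p) x = x"
    using funpow_diff_fixed[OF assms(1)] by (intro exI[of _ "b - a"]) simp
  define p where "p = (LEAST p. 0 < p \<and> (f ^^ p) x = x)"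
  have p: "0 < p" "(f ^^ p) x = x"
    using LeastI_ex[OF \<open>\<exists>p. _\<close>] by (simp_all add: p_def)
  have p_least: "(f ^^ j) x \<noteq> x" if "0 < j" "j < p" for j
    using not_less_Least[of j "\<lambda>p. 0 < p \<and> (f ^^ p) x = x"] that by (simp add: p_def)
  have "inj_on (\<lambda>j. (f ^^ j) x) {..<p}"
  proof (rule linorder_inj_onI')
    fix a b assume "a \<in> {..<p}" "b \<in> {..<p}" "a < b"
    show "(f ^^ a) x \<noteq> (f ^^ b) x"
    proof
      assume "(f ^^ a) x = (f ^^ b) x"
      with \<open>a < b\<close> \<open>b \<in> {..<p}\<close> have "(f ^^ (b - a)) x = x" "0 < b - a" "b - a < p"
        using funpow_diff_fixed[OF assms(1), of a b] by auto
      then show False using p_least by blast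
    qed
  qed
  moreover have orbit: "bi_orbit f g x = (\<lambda>j. (f ^^ j) x) ` {..<p}"
    using bi_orbit_periodic[OF assms(1) p] .
  ultimately have "k = p" by (simp add: k_def card_image)
  with p p_least orbit show "0 < k" "(f ^^ k) x = x" "\<And>j. 0 < j \<Longrightarrow> j < k \<Longrightarrow> (f ^^ j) x \<noteq> x"
    "bi_orbit f g x = (\<lambda>j. (f ^^ j) x) ` {..<k}" by simp_all
qed

end

lemma bi_orbit_subsetI:
  assumes "inverse_on G f g" "inverse_on G f' g'" "\<And>y. y \<in> G \<Longrightarrow> f' y \<in> bi_orbit f g y"
    and "x \<in> G"
  shows "bi_orbit f' g' x \<subseteq> bi_orbit f g x"
proof -
  interpret fg: inverse_on G f g by fact
  interpret fg': inverse_on G f' g' by fact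
  have "bi_orbit f' g' x \<subseteq> bi_orbit f g x \<inter> G"
  proof (rule bi_orbit_minimal)
    show "x \<in> bi_orbit f g x \<inter> G" using self_in_bi_orbit[of x f g] assms(4) by blast
    fix y assume y: "y \<in> bi_orbit f g x \<inter> G"
    then have orbit_y: "bi_orbit f g y \<subseteq> bi_orbit f g x"
      using fg.bi_orbit_trans assms(4) by blast
    show "f' y \<in> bi_orbit f g x \<inter> G"
      using assms(3) orbit_y y fg'.f_closed by blast
    have "y \<in> bi_orbit f g (g' y)"
      using assms(3)[of "g' y"] fg'.f_g fg'.g_closed y by simp
    then have "g' y \<in> bi_orbit f g y"
      using fg.bi_orbit_sym fg'.g_closed y by blast
    then show "g' y \<in> bi_orbit f g x \<inter> G"
      using orbit_y fg'.g_closed y by blast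
  qed
  then show ?thesis by blast
qed

section \<open>First return maps\<close>

lemma return_time_returns:
  assumes "x \<in> B" "1 \<le> n" "(V ^^ n) x \<in> B"
  shows "1 \<le> return_time V B x" "(V ^^ return_time V B x) x \<in> B" "return_time V B x \<le> n"
proof -
  have "\<exists>m. 1 \<le> m \<and> (V ^^ m) x \<in> B" using assms by blast
  then show "1 \<le> return_time V B x" "(V ^^ return_time V B x) x \<in> B"
    unfolding return_time_def by (metis (mono_tags, lifting) LeastI_ex)+
  show "return_time V B x \<le> n"
    unfolding return_time_def using assms by (simp add: Least_le)
qed

lemma not_in_before_return_time: "1 \<le> j \<Longrightarrow> j < return_time V B x \<Longrightarrow> (V ^^ j) x \<notin> B"
  unfolding return_time_def using not_less_Least by blast

lemma return_time_eqI:
  assumes "1 \<le> k" "(V ^^ k) x \<in> B" "\<And>j. 1 \<le> j \<Longrightarrow> j < k \<Longrightarrow> (V ^^ j) x \<notin> B"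
  shows "return_time V B x = k"
  unfolding return_time_def using assms by (intro Least_equality) (auto simp: not_less[symmetric])

lemma first_return_eq:
  "x \<in> B \<Longrightarrow> 1 \<le> n \<Longrightarrow> (V ^^ n) x \<in> B \<Longrightarrow> first_return V B x = (V ^^ return_time V B x) x"
  unfolding first_return_def by auto

lemma first_return_outside: "x \<notin> B \<Longrightarrow> first_return V B x = x"
  by (simp add: first_return_def)

lemma first_return_non_returning: "\<not> (\<exists>n\<ge>1. (V ^^ n) x \<in> B) \<Longrightarrow> first_return V B x = x"
  unfolding first_return_def by auto

lemma first_return_in: "x \<in> B \<Longrightarrow> first_return V B x \<in> B"
  unfolding first_return_def using return_time_returns(2) by auto

lemma first_return_in_bi_orbit: "first_return V B x \<in> bi_orbit V W x"
  unfolding first_return_def using self_in_bi_orbit funpow_in_bi_orbit by auto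

lemma funpow_in_imp_funpow_first_return:
  assumes "x \<in> B" "(V ^^ n) x \<in> B"
  shows "\<exists>m. (V ^^ n) x = (first_return V B ^^ m) x"
  using assms
proof (induction n arbitrary: x rule: less_induct)
  case (less n)
  show ?case
  proof (cases "n = 0")
    case True
    then show ?thesis by (metis funpow_0)
  next
    case False
    define r where "r = return_time V B x"
    have r: "1 \<le> r" "r \<le> n" and y: "first_return V B x = (V ^^ r) x"
      using return_time_returns[OF less.prems(1) _ less.prems(2)]
        first_return_eq[OF less.prems(1) _ less.prems(2)] False by (simp_all add: r_def)
    have "(V ^^ n) x = (V ^^ (n - r)) (first_return V B x)"
      using r(2) y by (metis funpow_add le_add_diff_inverse2 comp_apply)
    moreover have "n - r < n" using r False by simp
    ultimately obtain m where "(V ^^ n) x = (first_return V B ^^ m) (first_return V B x)"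
      using less.IH less.prems first_return_in by metis
    then show ?thesis by (metis funpow_Suc_right comp_apply)
  qed
qed

context inverse_on
begin

lemma first_return_inverse:
  assumes "x \<in> G" and returns: "x \<in> B \<Longrightarrow> \<exists>n\<ge>1. (f ^^ n) x \<in> B"
  shows "first_return g B (first_return f B x) = x"
proof (cases "x \<in> B")
  case True
  then obtain n where n: "1 \<le> n" "(f ^^ n) x \<in> B" using returns by blast
  define r where "r = return_time f B x"
  define y where "y = first_return f B x"
  have r: "1 \<le> r" "(f ^^ r) x \<in> B" and y_eq: "y = (f ^^ r) x"
    using return_time_returns[OF True n] first_return_eq[OF True n] by (simp_all add: r_def y_def)
  have backward: "(g ^^ j) y = (f ^^ (r - j)) x" if "j \<le> r" for j
  proof -
    have "y = (f ^^ j) ((f ^^ (r - j)) x)"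
      using that y_eq by (metis funpow_add le_add_diff_inverse comp_apply)
    then show ?thesis using g_funpow_f_funpow funpow_closed assms(1) by simp
  qed
  have "return_time g B y = r"
  proof (rule return_time_eqI)
    show "1 \<le> r" by (fact r(1))
    show "(g ^^ r) y \<in> B" using backward[of r] True by simp
    fix j assume "1 \<le> j" "j < r"
    then show "(g ^^ j) y \<notin> B"
      using backward[of j] not_in_before_return_time[of "r - j" f B x] by (simp add: r_def)
  qed
  then have "first_return g B y = (g ^^ r) y"
    using first_return_eq[of y B r g] r y_eq backward[of r] True by simp
  then show ?thesis using backward[of r] by (simp add: y_def)
qed (simp add: first_return_outside)

end

section \<open>Measure-preserving maps and Poincare recurrence\<close>

definition measure_preserving :: "'a measure \<Rightarrow> ('a \<Rightarrow> 'a) \<Rightarrow> bool" where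
  "measure_preserving M f \<longleftrightarrow> f \<in> M \<rightarrow>\<^sub>M M \<and> distr M M f = M"

lemma measure_preserving_funpow:
  assumes "measure_preserving M f"
  shows "measure_preserving M (f ^^ n)"
proof (induction n)
  case 0
  then show ?case by (simp add: measure_preserving_def id_def)
next
  case (Suc n)
  have f: "f \<in> M \<rightarrow>\<^sub>M M" "distr M M f = M" using assms by (simp_all add: measure_preserving_def)
  have fn: "f ^^ n \<in> M \<rightarrow>\<^sub>M M" "distr M M (f ^^ n) = M"
    using Suc by (simp_all add: measure_preserving_def)
  have "distr M M (f ^^ Suc n) = distr (distr M M (f ^^ n)) M f"
    using distr_distr[OF f(1) fn(1)] by simp
  then show ?case
    using f fn measurable_comp[OF fn(1) f(1)] by (simp add: measure_preserving_def o_def)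
qed

lemma AE_measure_preserving:
  assumes "measure_preserving M f" "AE x in M. Q x"
  shows "AE x in M. Q (f x)"
  using assms AE_distrD[of f M M Q] unfolding measure_preserving_def by metis

lemma AE_bi_orbit:
  assumes "measure_preserving M f" "measure_preserving M g" "AE x in M. Q x"
  shows "AE x in M. \<forall>y\<in>bi_orbit f g x. Q y"
proof -
  have "AE x in M. Q ((h ^^ n) x)" if "measure_preserving M h" for h n
    using AE_measure_preserving[OF measure_preserving_funpow[OF that] assms(3)] .
  then have "AE x in M. \<forall>n. Q ((f ^^ n) x) \<and> Q ((g ^^ n) x)"
    using assms(1,2) by (simp add: AE_all_countable)
  then show ?thesis by eventually_elim (auto simp: bi_orbit_def)
qed

lemma aut_measure_preserving:
  assumes "aut M V"
  shows "measure_preserving M V" "measure_preserving M (the_inv_into (space M) V)"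
proof -
  let ?W = "the_inv_into (space M) V"
  have V: "bij_betw V (space M) (space M)" "V \<in> M \<rightarrow>\<^sub>M M" "?W \<in> M \<rightarrow>\<^sub>M M" "distr M M V = M"
    using assms by (simp_all add: aut_def)
  then show "measure_preserving M V" by (simp add: measure_preserving_def)
  have "distr M M ?W = distr (distr M M V) M ?W" using V(4) by simp
  also have "\<dots> = distr M M (?W \<circ> V)" by (rule distr_distr[OF V(3,2)])
  also have "\<dots> = distr M M (\<lambda>x. x)"
    by (rule distr_cong) (use V(1) in \<open>auto simp: bij_betw_def the_inv_into_f_f\<close>)
  finally show "measure_preserving M ?W" using V(3) by (simp add: measure_preserving_def)
qed

lemma aut_inverse_on:
  assumes "aut M V"
  shows "inverse_on (space M) V (the_inv_into (space M) V)"
proof -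
  have bij: "bij_betw V (space M) (space M)" using assms by (simp add: aut_def)
  show ?thesis
    by unfold_locales
      (use bij in \<open>auto simp: bij_betw_def the_inv_into_f_f f_the_inv_into_f the_inv_into_into\<close>)
qed

lemma (in finite_measure) disjoint_family_equal_measure_zero:
  fixes V :: "nat \<Rightarrow> 'a set"
  assumes "disjoint_family V" "range V \<subseteq> sets M" "\<And>i. measure M (V i) = c"
  shows "c = 0"
proof (rule ccontr)
  assume "c \<noteq> 0"
  then have "0 < c" using assms(3)[of 0] measure_nonneg[of M "V 0"] by linarith
  then obtain N :: nat where N: "measure M (space M) / c < N" using reals_Archimedean2 by blast
  have "N * c = measure M (\<Union>i<N. V i)"
    using assms by (subst finite_measure_finite_Union) (auto simp: disjoint_family_on_def)
  also have "\<dots> \<le> measure M (space M)"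
    using assms(2) by (intro bounded_measure)
  finally show False using N \<open>0 < c\<close> by (simp add: field_simps)
qed

lemma (in finite_measure) poincare_recurrence:
  assumes f: "measure_preserving M f" and A: "A \<in> sets M"
  shows "AE x in M. x \<in> A \<longrightarrow> (\<exists>n\<ge>1. (f ^^ n) x \<in> A)"
proof -
  have fn: "f ^^ n \<in> M \<rightarrow>\<^sub>M M" "distr M M (f ^^ n) = M" for n
    using measure_preserving_funpow[OF f] by (simp_all add: measure_preserving_def)
  define W where "W = A \<inter> (\<Inter>n. (f ^^ Suc n) -` (space M - A) \<inter> space M)"
  have W: "W \<in> sets M"
    unfolding W_def using A measurable_sets[OF fn(1)]
    by (intro sets.Int sets.countable_INT') (auto simp del: funpow.simps)
  define V where "V i = (f ^^ i) -` W \<inter> space M" for i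
  have "disjoint_family V"
    unfolding disjoint_family_on_def
  proof (intro ballI impI)
    have "V i \<inter> V j = {}" if "i < j" for i j
    proof -
      obtain k where "j = Suc k + i" using \<open>i < j\<close> by (auto simp: less_iff_Suc_add)
      then have "(f ^^ j) x = (f ^^ Suc k) ((f ^^ i) x)" for x
        by (simp only: funpow_add comp_apply)
      then show ?thesis using measurable_space[OF fn(1)] by (auto simp: V_def W_def)
    qed
    then show "V i \<inter> V j = {}" if "i \<noteq> j" for i j
      using that Int_commute linorder_neqE_nat by metis
  qed
  moreover have "range V \<subseteq> sets M" using W fn(1) by (auto simp: V_def)
  moreover have "measure M (V i) = measure M W" for i
    using measure_distr[OF fn(1) W, of i] fn(2) by (simp add: V_def)
  ultimately have "measure M W = 0" by (rule disjoint_family_equal_measure_zero)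
  then have "W \<in> null_sets M" using W by (simp add: emeasure_eq_measure null_sets_def)
  then show ?thesis
  proof (rule AE_I')
    show "{x \<in> space M. \<not> (x \<in> A \<longrightarrow> (\<exists>n\<ge>1. (f ^^ n) x \<in> A))} \<subseteq> W"
    proof
      fix x assume "x \<in> {x \<in> space M. \<not> (x \<in> A \<longrightarrow> (\<exists>n\<ge>1. (f ^^ n) x \<in> A))}"
      then have "x \<in> space M" "x \<in> A" "(f ^^ Suc n) x \<notin> A" for n
        by (auto simp del: funpow.simps)
      then show "x \<in> W" using measurable_space[OF fn(1)] unfolding W_def by blast
    qed
  qed
qed

section \<open>The map \<open>T\<^sub>D \<circ> P\<close>\<close>

locale transversal_setting = T: inverse_on UNIV T Ti + P: inverse_on UNIV P Pi
  for T Ti P Pi :: "'a \<Rightarrow> 'a" + fixes D :: "'a set"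
begin

abbreviation TD :: "'a \<Rightarrow> 'a" where "TD \<equiv> first_return T D"
abbreviation U :: "'a \<Rightarrow> 'a" where "U \<equiv> first_return T D \<circ> P"
abbreviation Ui :: "'a \<Rightarrow> 'a" where "Ui \<equiv> the_inv_into UNIV U"

definition transversal :: "'a \<Rightarrow> bool" where
  "transversal x \<longleftrightarrow> finite (bi_orbit P Pi x) \<and> card (bi_orbit P Pi x \<inter> D) = 1"

lemma transversal_P_orbit_inter_D: "transversal d \<Longrightarrow> d \<in> D \<Longrightarrow> bi_orbit P Pi d \<inter> D = {d}"
  unfolding transversal_def using self_in_bi_orbit[of d P Pi] by (metis IntI card_1_singletonE singletonD)

context
  fixes d assumes d: "d \<in> D" "transversal d"
begin

lemma P_funpow_notin_D: "0 < j \<Longrightarrow> j < card (bi_orbit P Pi d) \<Longrightarrow> (P ^^ j) d \<notin> D"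
  using P.finite_bi_orbit_least_period(3)[of d j] transversal_P_orbit_inter_D[OF d(2,1)]
    funpow_in_bi_orbit[of j P d Pi] d(2) by (auto simp: transversal_def)

lemma U_funpow_eq_P_funpow: "j < card (bi_orbit P Pi d) \<Longrightarrow> (U ^^ j) d = (P ^^ j) d"
proof (induction j)
  case (Suc j)
  then show ?case using P_funpow_notin_D[of "Suc j"] by (simp add: first_return_outside)
qed simp

lemma U_funpow_card: "(U ^^ card (bi_orbit P Pi d)) d = TD d"
proof -
  let ?k = "card (bi_orbit P Pi d)"
  have "0 < ?k" "(P ^^ ?k) d = d"
    using P.finite_bi_orbit_least_period(1,2)[of d] d(2) by (simp_all add: transversal_def)
  then obtain m where m: "?k = Suc m" "(P ^^ Suc m) d = d" using gr0_conv_Suc by auto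
  then show ?thesis using U_funpow_eq_P_funpow[of m] by simp
qed

lemma return_time_U: "(\<exists>n\<ge>1. (U ^^ n) d \<in> D) \<and> return_time U D d = card (bi_orbit P Pi d)"
proof -
  let ?k = "card (bi_orbit P Pi d)"
  have k: "1 \<le> ?k"
    using P.finite_bi_orbit_least_period(1)[of d] d(2) by (simp add: transversal_def)
  moreover have "(U ^^ ?k) d \<in> D" using U_funpow_card first_return_in d(1) by simp
  moreover have "return_time U D d = ?k"
    using k \<open>(U ^^ ?k) d \<in> D\<close> U_funpow_eq_P_funpow P_funpow_notin_D by (intro return_time_eqI) auto
  ultimately show ?thesis by blast
qed

end

lemma first_return_U: "transversal x \<Longrightarrow> first_return U D x = TD x"
  using return_time_U[of x] U_funpow_card[of x] by (cases "x \<in> D") (auto simp: first_return_def)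


definition regular :: "'a \<Rightarrow> bool" where
  "regular x \<longleftrightarrow> transversal x \<and> P x \<in> bi_orbit T Ti x \<and>
     (x \<in> D \<longrightarrow> (\<exists>n\<ge>1. (T ^^ n) x \<in> D) \<and> (\<exists>n\<ge>1. (Ti ^^ n) x \<in> D))"

definition regular_set :: "'a set" where
  "regular_set = {x. \<forall>y\<in>bi_orbit T Ti x. regular y}"

lemma regular_set_regular: "x \<in> regular_set \<Longrightarrow> regular x"
  unfolding regular_set_def using self_in_bi_orbit[of x T Ti] by blast

lemma regular_set_T_orbit: "x \<in> regular_set \<Longrightarrow> y \<in> bi_orbit T Ti x \<Longrightarrow> y \<in> regular_set"
  unfolding regular_set_def using T.bi_orbit_trans by blast

lemma inverse_on_regular_set: "inverse_on regular_set T Ti"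
proof
  fix x assume x: "x \<in> regular_set"
  show "T x \<in> regular_set" using regular_set_T_orbit[OF x] funpow_in_bi_orbit[of 1 T x Ti] by simp
  show "Ti x \<in> regular_set"
    using regular_set_T_orbit[OF x] funpow_in_bi_orbit[of 1 Ti x T] by (simp add: bi_orbit_commute)
qed (simp_all add: T.g_f T.f_g)

lemma P_orbit_subset_T_orbit:
  assumes x: "x \<in> regular_set"
  shows "bi_orbit P Pi x \<subseteq> bi_orbit T Ti x"
proof -
  have "(P ^^ j) x \<in> bi_orbit T Ti x" for j
  proof (induction j)
    case (Suc j)
    then have "P ((P ^^ j) x) \<in> bi_orbit T Ti ((P ^^ j) x)"
      using regular_set_regular regular_set_T_orbit[OF x] by (simp add: regular_def)
    then show ?case using T.bi_orbit_trans Suc by auto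
  qed (simp add: self_in_bi_orbit)
  moreover have "transversal x" using regular_set_regular[OF x] by (simp add: regular_def)
  then have "\<exists>j. y = (P ^^ j) x" if "y \<in> bi_orbit P Pi x" for y
    using that P.finite_bi_orbit_least_period(4)[of x] by (auto simp: transversal_def)
  ultimately show ?thesis by blast
qed

lemma regular_set_P_orbit: "x \<in> regular_set \<Longrightarrow> y \<in> bi_orbit P Pi x \<Longrightarrow> y \<in> regular_set"
  using P_orbit_subset_T_orbit regular_set_T_orbit by blast

lemma U_in_T_orbit:
  assumes "x \<in> regular_set"
  shows "U x \<in> bi_orbit T Ti x"
proof -
  have "P x \<in> bi_orbit T Ti x" using regular_set_regular[OF assms] by (simp add: regular_def)
  moreover have "TD (P x) \<in> bi_orbit T Ti (P x)" by (rule first_return_in_bi_orbit)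
  ultimately show ?thesis using T.bi_orbit_trans by auto
qed

text \<open>The inverse of \<open>U\<close> is \<open>P\<^sup>-\<^sup>1\<close> composed with the first return map of \<open>T\<^sup>-\<^sup>1\<close>, since the
  first return maps of \<open>T\<close> and \<open>T\<^sup>-\<^sup>1\<close> to \<open>D\<close> are mutually inverse at points recurrent both ways.\<close>

lemma U_eq_iff:
  assumes y: "y \<in> regular_set"
  shows "U z = y \<longleftrightarrow> z = Pi (first_return Ti D y)"
proof
  have returns: "y \<in> D \<Longrightarrow> \<exists>n\<ge>1. (T ^^ n) y \<in> D" "y \<in> D \<Longrightarrow> \<exists>n\<ge>1. (Ti ^^ n) y \<in> D"
    using regular_set_regular[OF y] by (simp_all add: regular_def)
  show "z = Pi (first_return Ti D y)" if "U z = y"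
  proof -
    have "\<exists>n\<ge>1. (T ^^ n) (P z) \<in> D" if "P z \<in> D"
    proof (rule ccontr)
      assume "\<not> (\<exists>n\<ge>1. (T ^^ n) (P z) \<in> D)"
      moreover from this have "y = P z"
        using \<open>U z = y\<close> first_return_non_returning[of T "P z" D] by simp
      ultimately show False using returns(1) \<open>P z \<in> D\<close> by auto
    qed
    then have "first_return Ti D y = P z"
      using T.first_return_inverse that by auto
    then show ?thesis by (simp add: P.g_f)
  qed
  show "U z = y" if "z = Pi (first_return Ti D y)"
    using that inverse_on.first_return_inverse[OF T.inverse_on_swap _ returns(2)] by (simp add: P.f_g)
qed

lemma inverse_on_U: "inverse_on regular_set U Ui"
proof -
  have Ui: "Ui y = Pi (first_return Ti D y)" if "y \<in> regular_set" for y
    using U_eq_iff[OF that] by (simp add: the_inv_into_def)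
  show ?thesis
  proof
    fix x assume x: "x \<in> regular_set"
    show "U x \<in> regular_set" using U_in_T_orbit[OF x] regular_set_T_orbit[OF x] by blast
    then show "Ui (U x) = x" using U_eq_iff[of "U x" x] Ui[of "U x"] by simp
    show "U (Ui x) = x" using U_eq_iff[OF x] Ui[OF x] by simp
    have "first_return Ti D x \<in> regular_set"
      using first_return_in_bi_orbit[of Ti D x T] regular_set_T_orbit[OF x] by (simp add: bi_orbit_commute)
    then show "Ui x \<in> regular_set"
      using Ui[OF x] regular_set_P_orbit funpow_in_bi_orbit[of 1 Pi _ P] by (simp add: bi_orbit_commute)
  qed
qed

lemma TD_funpow_eq_U_funpow:
  assumes "d \<in> D" "d \<in> regular_set"
  shows "\<exists>n. (TD ^^ m) d = (U ^^ n) d"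
proof -
  have "(TD ^^ m) d \<in> D \<inter> regular_set \<and> (\<exists>n. (TD ^^ m) d = (U ^^ n) d)"
  proof (induction m)
    case 0
    then show ?case using assms by (auto intro: exI[of _ 0])
  next
    case (Suc m)
    then obtain n where z: "(TD ^^ m) d \<in> D" "(TD ^^ m) d \<in> regular_set" "(TD ^^ m) d = (U ^^ n) d"
      by blast
    let ?k = "card (bi_orbit P Pi ((TD ^^ m) d))"
    have "transversal ((TD ^^ m) d)" using regular_set_regular[OF z(2)] by (simp add: regular_def)
    then have "(TD ^^ Suc m) d = (U ^^ (?k + n)) d"
      using U_funpow_card z by (simp add: funpow_add)
    moreover have "(TD ^^ Suc m) d \<in> D \<inter> regular_set"
      using first_return_in[OF z(1)] regular_set_T_orbit[OF z(2) first_return_in_bi_orbit] by simp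
    ultimately show ?case by blast
  qed
  then show ?thesis by blast
qed

lemma T_funpow_in_U_orbit:
  assumes "d \<in> D" "d \<in> regular_set" "(T ^^ n) d \<in> D"
  shows "(T ^^ n) d \<in> bi_orbit U Ui d"
  using funpow_in_imp_funpow_first_return[OF assms(1,3)] TD_funpow_eq_U_funpow[OF assms(1,2)]
    funpow_in_bi_orbit by metis

lemma D_points_in_same_U_orbit:
  assumes "d \<in> D" "d \<in> regular_set" "d' \<in> D" "d' \<in> regular_set" "d' \<in> bi_orbit T Ti d"
  shows "d' \<in> bi_orbit U Ui d"
proof -
  interpret U: inverse_on regular_set U Ui by (rule inverse_on_U)
  consider (forward) n where "d' = (T ^^ n) d" | (backward) n where "d' = (Ti ^^ n) d"
    using assms(5) unfolding bi_orbit_def by blast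
  then show ?thesis
  proof cases
    case forward
    then show ?thesis using T_funpow_in_U_orbit assms(1-3) by blast
  next
    case backward
    then have "d = (T ^^ n) d'" using inverse_on.g_funpow_f_funpow[OF T.inverse_on_swap] by simp
    then show ?thesis using T_funpow_in_U_orbit U.bi_orbit_sym assms by metis
  qed
qed

lemma U_funpow_from_D:
  assumes y: "y \<in> regular_set"
  obtains d j where "d \<in> D" "d \<in> regular_set" "d \<in> bi_orbit T Ti y" "y = (U ^^ j) d"
proof -
  have "transversal y" using regular_set_regular[OF y] by (simp add: regular_def)
  then obtain d where d: "bi_orbit P Pi y \<inter> D = {d}"
    unfolding transversal_def by (meson card_1_singletonE)
  then have dy: "d \<in> bi_orbit P Pi y" "d \<in> D" by auto
  then have "d \<in> regular_set" "d \<in> bi_orbit T Ti y"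
    using regular_set_P_orbit[OF y] P_orbit_subset_T_orbit[OF y] by auto
  moreover have "transversal d" using regular_set_regular[OF \<open>d \<in> regular_set\<close>] by (simp add: regular_def)
  moreover obtain j where "j < card (bi_orbit P Pi d)" "y = (P ^^ j) d"
    using P.bi_orbit_sym[OF _ dy(1)] P.finite_bi_orbit_least_period(4)[of d] \<open>transversal d\<close>
    by (auto simp: transversal_def)
  ultimately show ?thesis using that dy(2) U_funpow_eq_P_funpow by metis
qed

lemma T_in_U_orbit:
  assumes y: "y \<in> regular_set"
  shows "T y \<in> bi_orbit U Ui y"
proof -
  interpret U: inverse_on regular_set U Ui by (rule inverse_on_U)
  have Ty: "T y \<in> regular_set" "T y \<in> bi_orbit T Ti y"
    using inverse_on.f_closed[OF inverse_on_regular_set y] funpow_in_bi_orbit[of 1 T y Ti] by simp_all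
  obtain d j where d: "d \<in> D" "d \<in> regular_set" "d \<in> bi_orbit T Ti y" "y = (U ^^ j) d"
    using U_funpow_from_D[OF y] .
  obtain d' j' where d': "d' \<in> D" "d' \<in> regular_set" "d' \<in> bi_orbit T Ti (T y)" "T y = (U ^^ j') d'"
    using U_funpow_from_D[OF Ty(1)] .
  have "d' \<in> bi_orbit T Ti d"
    using d(3) d'(3) Ty(2) T.bi_orbit_sym[OF _ d(3)] T.bi_orbit_trans by blast
  then have "d' \<in> bi_orbit U Ui d" using D_points_in_same_U_orbit d d' by blast
  moreover have "T y \<in> bi_orbit U Ui d'" using d'(4) funpow_in_bi_orbit by metis
  moreover have "d \<in> bi_orbit U Ui y" using d(2,4) U.bi_orbit_sym funpow_in_bi_orbit by metis
  ultimately show ?thesis using U.bi_orbit_trans d(2) y by blast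
qed

lemma T_orbit_eq_U_orbit:
  assumes "x \<in> regular_set"
  shows "bi_orbit T Ti x = bi_orbit U Ui x"
proof
  show "bi_orbit T Ti x \<subseteq> bi_orbit U Ui x"
    by (rule bi_orbit_subsetI[OF inverse_on_U inverse_on_regular_set T_in_U_orbit assms])
  show "bi_orbit U Ui x \<subseteq> bi_orbit T Ti x"
    by (rule bi_orbit_subsetI[OF inverse_on_regular_set inverse_on_U U_in_T_orbit assms])
qed

end

theorem mainTheorem20:
  fixes M :: "'a::polish_space measure" and T P :: "'a \<Rightarrow> 'a" and D :: "'a set"
  assumes "sets M = sets borel" and "prob_space M" and "atomless M"
    and "aut M T" and "aut M P" and "periodic M P" and "fundamental_domain M P D"
  defines "U \<equiv> first_return T D \<circ> P"
  shows "(AE x in M. first_return U D x = first_return T D x) \<and>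
         (AE x in M. x \<in> D \<longrightarrow>
            (\<exists>n\<ge>1. (U ^^ n) x \<in> D) \<and> return_time U D x = card (aut_orbit M P x)) \<and>
         (P \<in> full_group M T \<longrightarrow> same_orbits M T U)"
proof -
  have space: "space M = UNIV" using sets_eq_imp_space_eq[OF assms(1)] by simp
  then have orbit: "aut_orbit M V x = bi_orbit V (the_inv_into UNIV V) x" for V x
    by (simp add: aut_orbit_eq_bi_orbit)
  interpret transversal_setting T "the_inv_into UNIV T" P "the_inv_into UNIV P" D
    using aut_inverse_on[OF assms(4)] aut_inverse_on[OF assms(5)]
    by (simp add: transversal_setting_def space)
  have "AE x in M. finite (aut_orbit M P x)" "AE x in M. card (aut_orbit M P x \<inter> D) = 1"
    using assms(6,7) by (simp_all add: periodic_def fundamental_domain_def)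
  then have transversal: "AE x in M. transversal x"
    by eventually_elim (simp add: transversal_def orbit)
  have "same_orbits M T U" if "P \<in> full_group M T"
  proof -
    interpret prob_space M by fact
    have T: "measure_preserving M T" "measure_preserving M (the_inv_into UNIV T)"
      using aut_measure_preserving[OF assms(4)] by (simp_all add: space)
    have "D \<in> sets M" using assms(7) by (simp add: fundamental_domain_def)
    note recurrence = poincare_recurrence[OF T(1) this] poincare_recurrence[OF T(2) this]
    have "AE x in M. P x \<in> bi_orbit T (the_inv_into UNIV T) x"
      using that by (simp add: full_group_def orbit)
    with transversal recurrence have "AE x in M. regular x"
      by eventually_elim (simp add: regular_def)
    then have "AE x in M. x \<in> regular_set"
      using AE_bi_orbit[OF T] by (simp add: regular_set_def)
    then show ?thesis
      unfolding same_orbits_def by eventually_elim (simp add: orbit T_orbit_eq_U_orbit U_def)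
  qed
  moreover have "AE x in M. first_return U D x = first_return T D x"
    using transversal by eventually_elim (simp add: first_return_U U_def)
  moreover have "AE x in M. x \<in> D \<longrightarrow>
      (\<exists>n\<ge>1. (U ^^ n) x \<in> D) \<and> return_time U D x = card (aut_orbit M P x)"
    using transversal by eventually_elim (use return_time_U in \<open>simp add: orbit U_def\<close>)
  ultimately show ?thesis by blast
qed

end
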